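(* Let $\theta<1/2$ and let $\mu_j\in\mathbb C$ with $\Re(\mu_j)\ge-\theta$. Then for every $\varepsilon\in[-1/2,1/2]$ and every real $t$, $$\left|\frac{\Gamma\left(\frac{\mu_j+1+\varepsilon+it}{2}\right)}{\Gamma\left(\frac{\mu_j-\varepsilon+it}{2}\right)}\right|\le\left|\frac{\mu_j+2-\varepsilon+it}{2}\right|^{1/2+\varepsilon}.$$
   Context: $\Gamma$ denotes Euler's gamma function. *)

theory Defs
  imports "HOL-Analysis.Analysis"
begin

end

theory Submission
  imports Defs "HOL-Complex_Analysis.Complex_Analysis"
begin

text \<open>
  With \<open>s = (\<mu> - \<epsilon> + i t) / 2\<close> and \<open>a = 1/2 + \<epsilon> \<in> [0, 1]\<close> the claim reads
  \<open>|\<Gamma>(s + a)| \<le> |\<Gamma>(s)| |s + 1|^a\<close>.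
  For \<open>Re w \<ge> 1/2\<close> the function \<open>t \<mapsto> log |\<Gamma>(w + t)|\<close> is convex on \<open>t \<ge> 0\<close>, since its
  second derivative is \<open>Re \<psi>'(w + t)\<close> and \<open>Re \<psi>' \<ge> 0\<close> on the half-plane \<open>Re z \<ge> 1/2\<close>:
  on the boundary line the reflection formula gives \<open>Re \<psi>'(1/2 + i y) = \<pi>\<^sup>2 / (2 cosh\<^sup>2 (\<pi> y))\<close>,
  \<open>\<psi>'\<close> vanishes at infinity, and the maximum principle applies.
  Convexity between \<open>t = 0\<close> and \<open>t = 1\<close> together with \<open>\<Gamma>(w + 1) = w \<Gamma>(w)\<close> gives
  \<open>|\<Gamma>(w + a)| \<le> |\<Gamma>(w)| |w|^a\<close>. Taking \<open>w = s + 1\<close>, the functional equation and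
  \<open>|s| \<le> |s + a|\<close> give the claim.
\<close>

lemma Re_pos_not_nonpos_Reals: "0 < Re z \<Longrightarrow> (z :: complex) \<notin> \<real>\<^sub>\<le>\<^sub>0"
  by (auto simp: complex_nonpos_Reals_iff)

lemma Re_pos_not_nonpos_Ints: "0 < Re z \<Longrightarrow> (z :: complex) \<notin> \<int>\<^sub>\<le>\<^sub>0"
  using Re_pos_not_nonpos_Reals nonpos_Ints_subset_nonpos_Reals by blast

lemma has_real_derivative_Re_along_line:
  assumes "(F has_field_derivative F') (at (w + of_real t * d))"
  shows "((\<lambda>t. Re (F (w + of_real t * d))) has_real_derivative Re (d * F')) (at t)"
proof -
  have "((\<lambda>t. w + of_real t * d) has_vector_derivative d) (at t)"
    by (auto intro!: derivative_eq_intros)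
  from field_vector_diff_chain_at[OF this assms] show ?thesis
    by (auto dest!: has_field_derivative_Re simp: o_def)
qed

lemma Re_ln_Gamma_half_line:
  "Re (ln_Gamma (1/2 + of_real y * \<i>)) = (ln pi - ln (cosh (pi * y))) / 2"
proof -
  define z where "z = 1/2 + of_real y * \<i>"
  have "z \<notin> \<int>\<^sub>\<le>\<^sub>0" by (rule Re_pos_not_nonpos_Ints) (simp add: z_def)
  then have "norm (Gamma z) = exp (Re (ln_Gamma z))"
    by (simp add: Gamma_complex_altdef)
  moreover have "Gamma z * Gamma (1 - z) = of_real ((norm (Gamma z))\<^sup>2)"
    \<comment> \<open>on the line \<open>Re z = 1/2\<close> the reflection partner \<open>1 - z\<close> is \<open>cnj z\<close>\<close>
    using complex_norm_square[of "Gamma z"]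
    by (simp add: cnj_Gamma z_def complex_eq_iff)
  moreover have "sin (of_real pi * z) = of_real (cosh (pi * y))"
  proof -
    have "sin (of_real pi * z) = cos (\<i> * of_real (pi * y))"
      by (simp add: z_def algebra_simps sin_add)
    also have "\<dots> = of_real (cosh (pi * y))"
      using cosh_real[of "pi * y"] by (simp add: cosh_def exp_minus del: of_real_mult)
    finally show ?thesis .
  qed
  ultimately have "exp (Re (ln_Gamma z)) ^ 2 = pi / cosh (pi * y)"
    using Gamma_reflection_complex[of z] by (metis of_real_divide of_real_eq_iff)
  then have "2 * Re (ln_Gamma z) = ln (pi / cosh (pi * y))"
    by (metis exp_double ln_exp)
  then show ?thesis by (simp add: ln_div z_def)
qed

lemma Re_Polygamma_1_half_line:
  "Re (Polygamma 1 (1/2 + of_real y * \<i>)) = pi\<^sup>2 / (2 * (cosh (pi * y))\<^sup>2)"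
proof -
  \<comment> \<open>\<open>Re \<psi>'\<close> is \<open>-\<partial>\<^sub>y\<^sup>2\<close> of \<open>Re ln \<Gamma>\<close>, which is explicit on this line\<close>
  define z where "z y = 1/2 + of_real y * \<i>" for y
  define g' where "g' y = - pi / 2 * (sinh (pi * y) / cosh (pi * y))" for y
  have "((\<lambda>y. (ln pi - ln (cosh (pi * y))) / 2) has_real_derivative g' y) (at y)" for y
    unfolding g'_def by (auto intro!: derivative_eq_intros simp: field_simps)
  moreover have "((\<lambda>y. Re (ln_Gamma (z y))) has_real_derivative Re (\<i> * Digamma (z y))) (at y)" for y
    unfolding z_def
    by (rule has_real_derivative_Re_along_line, rule has_field_derivative_ln_Gamma_complex,
        rule Re_pos_not_nonpos_Reals) simp
  ultimately have Digamma_eq: "Re (\<i> * Digamma (z y)) = g' y" for y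
    using DERIV_unique by (force simp: Re_ln_Gamma_half_line z_def)
  have "((\<lambda>y. Re (\<i> * Digamma (z y))) has_real_derivative Re (\<i> * (\<i> * Polygamma 1 (z y)))) (at y)"
    unfolding z_def
    by (rule has_real_derivative_Re_along_line[where F = "\<lambda>z. \<i> * Digamma z"])
       (auto intro!: derivative_eq_intros has_field_derivative_Polygamma Re_pos_not_nonpos_Ints)
  then have "(g' has_real_derivative - Re (Polygamma 1 (z y))) (at y)"
    by (simp only: Digamma_eq) simp
  moreover have "(g' has_real_derivative - pi\<^sup>2 / (2 * (cosh (pi * y))\<^sup>2)) (at y)"
    unfolding g'_def[abs_def] using sinh_square_eq[of "pi * y"]
    by (auto intro!: derivative_eq_intros simp: field_simps power2_eq_square) algebra
  ultimately show ?thesis using DERIV_unique by (force simp: z_def)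
qed

lemma norm_Polygamma_1_le:
  fixes z :: complex
  assumes "0 \<le> Re z" "1/2 < norm z"
  shows "norm (Polygamma 1 z) \<le> 2 / (norm z - 1/2)"
proof -
  define r where "r = norm z"
  define f where "f n = 2 / (r - 1/2 + real n)" for n
  have "f \<longlonglongrightarrow> 0"
    unfolding f_def by (intro real_tendsto_divide_at_top[OF tendsto_const]
        filterlim_tendsto_add_at_top[OF tendsto_const filterlim_real_sequentially])
  from telescope_sums'[OF this] have telescope: "(\<lambda>n. f n - f (Suc n)) sums (2 / (r - 1/2))"
    by (simp add: f_def)
  \<comment> \<open>\<open>|z + k|\<^sup>2 \<ge> r\<^sup>2 + k\<^sup>2 \<ge> (r + k)\<^sup>2 / 2\<close>, and \<open>1 / ((r + k)\<^sup>2 - 1/4)\<close> telescopes\<close>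
  have term_le: "norm (inverse ((z + of_nat k)\<^sup>2)) \<le> f k - f (Suc k)" for k
  proof -
    have "(norm (z + of_nat k))\<^sup>2 = r\<^sup>2 + 2 * k * Re z + k\<^sup>2"
      unfolding r_def cmod_power2 by (simp add: power2_eq_square algebra_simps)
    moreover have "(r + k)\<^sup>2 \<le> 2 * (r\<^sup>2 + k\<^sup>2)"
      using zero_le_power2[of "r - k"] by (simp add: power2_eq_square algebra_simps)
    ultimately have lower: "((r + k)\<^sup>2 - 1/4) / 2 \<le> (norm (z + of_nat k))\<^sup>2"
      using mult_nonneg_nonneg[OF of_nat_0_le_iff[of k] assms(1)] by simp
    have pos: "0 < r - 1/2 + k"
      using assms(2) by (simp add: r_def)
    have "(r + k)\<^sup>2 - 1/4 = (r - 1/2 + k) * (r + 1/2 + k)"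
      by (simp add: power2_eq_square algebra_simps)
    then have "0 < (r + k)\<^sup>2 - 1/4"
      using pos by simp
    have "norm (inverse ((z + of_nat k)\<^sup>2)) = 1 / (norm (z + of_nat k))\<^sup>2"
      by (simp add: norm_inverse norm_power divide_inverse)
    also have "\<dots> \<le> 1 / (((r + k)\<^sup>2 - 1/4) / 2)"
      using lower \<open>0 < (r + k)\<^sup>2 - 1/4\<close> by (intro frac_le) auto
    also have "\<dots> = f k - f (Suc k)"
      unfolding f_def using pos by (simp add: field_simps power2_eq_square)
    finally show ?thesis .
  qed
  have "Polygamma 1 z = (\<Sum>k. inverse ((z + of_nat k)\<^sup>2))"
    by (simp add: Polygamma_def power2_eq_square)
  also have "norm \<dots> \<le> (\<Sum>n. f n - f (Suc n))"
    using telescope by (intro norm_suminf_le term_le) (simp add: sums_iff)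
  finally show ?thesis
    using telescope by (simp add: sums_iff r_def)
qed

lemma Re_nonpos_on_halfplane_if_vanishing_at_infinity:
  fixes f :: "complex \<Rightarrow> complex" and c :: real
  assumes holo: "f holomorphic_on {z. c < Re z}"
    and cont: "continuous_on {z. c \<le> Re z} f"
    and boundary: "\<And>y. Re (f (of_real c + of_real y * \<i>)) \<le> 0"
    and vanishing: "\<And>e. 0 < e \<Longrightarrow> \<exists>R. \<forall>z. c \<le> Re z \<longrightarrow> R \<le> norm z \<longrightarrow> Re (f z) \<le> e"
    and "c < Re \<xi>"
  shows "Re (f \<xi>) \<le> 0"
proof (rule field_le_epsilon)
  fix e :: real
  assume "0 < e"
  then obtain R where R: "\<And>z. c \<le> Re z \<Longrightarrow> R \<le> norm z \<Longrightarrow> Re (f z) \<le> e"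
    using vanishing by blast
  define R' where "R' = max R (norm \<xi> + 1)"
  define S where "S = {z. c < Re z} \<inter> ball 0 R'"
  have "open S"
    unfolding S_def by (intro open_Int open_halfspace_Re_gt open_ball)
  have closure_S: "closure S \<subseteq> {z. c \<le> Re z} \<inter> cball 0 R'"
    unfolding S_def by (intro closure_minimal closed_Int closed_halfspace_Re_ge closed_cball) auto
  have "Re (f \<xi>) \<le> e"
  proof (rule maximum_real_frontier[of f S])
    show "f holomorphic_on interior S"
      using holo interior_open[OF \<open>open S\<close>] by (auto simp: S_def elim: holomorphic_on_subset)
    show "continuous_on (closure S) f"
      using cont closure_S continuous_on_subset by blast
    show "bounded S" "\<xi> \<in> S"
      using \<open>c < Re \<xi>\<close> by (auto simp: S_def R'_def)
  next
    fix z
    assume "z \<in> frontier S"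
    then have "c \<le> Re z" "norm z \<le> R'" "z \<notin> S"
      using closure_S interior_open[OF \<open>open S\<close>] by (auto simp: frontier_def)
    then consider "Re z = c" | "norm z = R'"
      by (force simp: S_def)
    then show "Re (f z) \<le> e"
    proof cases
      case 1
      then have "z = of_real c + of_real (Im z) * \<i>"
        by (simp add: complex_eq_iff)
      then show ?thesis
        using boundary[of "Im z"] \<open>0 < e\<close> by simp
    next
      case 2
      then show ?thesis
        using R \<open>c \<le> Re z\<close> by (simp add: R'_def)
    qed
  qed
  then show "Re (f \<xi>) \<le> 0 + e"
    by simp
qed

lemma Re_Polygamma_1_nonneg:
  fixes z :: complex
  assumes "1/2 \<le> Re z"
  shows "0 \<le> Re (Polygamma 1 z)"
proof (cases "Re z = 1/2")
  case True
  then have "z = 1/2 + of_real (Im z) * \<i>"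
    by (simp add: complex_eq_iff)
  then show ?thesis
    using Re_Polygamma_1_half_line[of "Im z"] by simp
next
  case False
  have no_poles: "w \<notin> \<int>\<^sub>\<le>\<^sub>0" if "1/2 \<le> Re w" for w :: complex
    using that by (intro Re_pos_not_nonpos_Ints) simp
  have "Re (- Polygamma 1 z) \<le> 0"
  proof (rule Re_nonpos_on_halfplane_if_vanishing_at_infinity[where f = "\<lambda>z. - Polygamma 1 z" and c = "1/2"])
    show "(\<lambda>z. - Polygamma 1 z) holomorphic_on {z. 1/2 < Re z}"
      using no_poles by (intro holomorphic_intros) force
    show "continuous_on {z. 1/2 \<le> Re z} (\<lambda>z. - Polygamma 1 z)"
      using no_poles by (intro continuous_intros continuous_on_Polygamma) auto
    show "Re (- Polygamma 1 (of_real (1/2) + of_real y * \<i>)) \<le> 0" for y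
      using Re_Polygamma_1_half_line[of y] by simp
    show "1/2 < Re z"
      using assms False by simp
  next
    fix e :: real
    assume "0 < e"
    have "Re (- Polygamma 1 w) \<le> e" if "1/2 \<le> Re w" "1/2 + 2/e \<le> norm w" for w
    proof -
      have "0 < 2 / e"
        using \<open>0 < e\<close> by simp
      have "Re (- Polygamma 1 w) \<le> norm (Polygamma 1 w)"
        using abs_Re_le_cmod[of "Polygamma 1 w"] by simp
      also have "\<dots> \<le> 2 / (norm w - 1/2)"
        using that \<open>0 < 2 / e\<close> by (intro norm_Polygamma_1_le) linarith+
      also have "\<dots> \<le> 2 / (2 / e)"
        using that \<open>0 < 2 / e\<close> by (intro frac_le) linarith+
      also have "\<dots> = e"
        by simp
      finally show ?thesis .
    qed
    then show "\<exists>R. \<forall>w. 1/2 \<le> Re w \<longrightarrow> R \<le> norm w \<longrightarrow> Re (- Polygamma 1 w) \<le> e"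
      by blast
  qed
  then show ?thesis
    by simp
qed

lemma convex_on_Re_ln_Gamma_shift:
  fixes w :: complex
  assumes "1/2 \<le> Re w"
  shows "convex_on {0..} (\<lambda>t. Re (ln_Gamma (w + of_real t)))"
proof (rule f''_ge0_imp_convex)
  fix t :: real
  assume "t \<in> {0..}"
  then have Re_shift: "1/2 \<le> Re (w + of_real t)"
    using assms by simp
  show "((\<lambda>t. Re (ln_Gamma (w + of_real t))) has_real_derivative Re (Digamma (w + of_real t))) (at t)"
    using has_real_derivative_Re_along_line[of ln_Gamma _ w t 1] Re_shift
    by (simp add: has_field_derivative_ln_Gamma_complex Re_pos_not_nonpos_Reals)
  show "((\<lambda>t. Re (Digamma (w + of_real t))) has_real_derivative Re (Polygamma 1 (w + of_real t))) (at t)"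
    using has_real_derivative_Re_along_line[of Digamma _ w t 1] Re_shift
    by (simp add: has_field_derivative_Polygamma[of _ 0, simplified] Re_pos_not_nonpos_Ints)
  show "0 \<le> Re (Polygamma 1 (w + of_real t))"
    using Re_shift by (rule Re_Polygamma_1_nonneg)
qed simp

lemma norm_Gamma_shift_le_norm_powr:
  fixes w :: complex and a :: real
  assumes "1/2 \<le> Re w" "0 \<le> a" "a \<le> 1"
  shows "norm (Gamma (w + of_real a)) \<le> norm (Gamma w) * norm w powr a"
proof -
  define H where "H t = Re (ln_Gamma (w + of_real t))" for t
  have norm_Gamma: "norm (Gamma (w + of_real t)) = exp (H t)" if "0 \<le> t" for t
  proof -
    have "w + of_real t \<notin> \<int>\<^sub>\<le>\<^sub>0"
      using assms(1) that by (intro Re_pos_not_nonpos_Ints) simp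
    then show ?thesis
      by (simp add: Gamma_complex_altdef H_def)
  qed
  have "w \<notin> \<int>\<^sub>\<le>\<^sub>0" "w \<noteq> 0"
    using assms(1) Re_pos_not_nonpos_Ints by auto
  then have "exp (H 1) = exp (ln (norm w) + H 0)"
    using Gamma_plus1[of w] norm_Gamma[of 1] norm_Gamma[of 0] by (simp add: norm_mult exp_add)
  then have "H 1 - H 0 = ln (norm w)"
    by simp
  moreover have "convex_on {0..1} H"
    unfolding H_def using convex_on_Re_ln_Gamma_shift[OF assms(1)] by (rule convex_on_subset) auto
  ultimately have "H a \<le> H 0 + a * ln (norm w)"
    using convex_onD_Icc'[of 0 1 H a] assms(2,3) by (simp add: algebra_simps)
  then have "exp (H a) \<le> exp (H 0) * norm w powr a"
    using \<open>w \<noteq> 0\<close> by (simp add: powr_def flip: exp_add)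
  then show ?thesis
    using norm_Gamma[of a] norm_Gamma[of 0] assms(2) by simp
qed

lemma norm_le_norm_add_of_real:
  fixes s :: complex and a :: real
  assumes "0 \<le> a" "0 \<le> 2 * Re s + a"
  shows "norm s \<le> norm (s + of_real a)"
proof (rule power2_le_imp_le)
  have "(norm (s + of_real a))\<^sup>2 - (norm s)\<^sup>2 = a * (2 * Re s + a)"
    unfolding cmod_power2 by (simp add: power2_eq_square algebra_simps)
  then show "(norm s)\<^sup>2 \<le> (norm (s + of_real a))\<^sup>2"
    using assms by (metis diff_ge_0_iff_ge zero_le_mult_iff)
qed simp

lemma norm_Gamma_shift_le_norm_plus_1_powr:
  fixes s :: complex and a :: real
  assumes "s \<notin> \<int>\<^sub>\<le>\<^sub>0" "0 \<le> a" "a \<le> 1" "0 < 2 * Re s + a"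
  shows "norm (Gamma (s + of_real a)) \<le> norm (Gamma s) * norm (s + 1) powr a"
proof -
  have "0 < Re (s + of_real a)"
    using assms(2,4) by simp
  then have "s + of_real a \<notin> \<int>\<^sub>\<le>\<^sub>0" "0 < norm (s + of_real a)"
    using Re_pos_not_nonpos_Ints by (auto simp: complex_eq_iff)
  then have "norm (s + of_real a) * norm (Gamma (s + of_real a)) = norm (Gamma (s + 1 + of_real a))"
    using Gamma_plus1[of "s + of_real a"] by (simp add: norm_mult add_ac)
  also have "\<dots> \<le> norm (Gamma (s + 1)) * norm (s + 1) powr a"
    using assms by (intro norm_Gamma_shift_le_norm_powr) auto
  also have "\<dots> = norm s * (norm (Gamma s) * norm (s + 1) powr a)"
    using Gamma_plus1[OF assms(1)] by (simp add: norm_mult)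
  also have "\<dots> \<le> norm (s + of_real a) * (norm (Gamma s) * norm (s + 1) powr a)"
    using assms by (intro mult_right_mono norm_le_norm_add_of_real) auto
  finally show ?thesis
    using \<open>0 < norm (s + of_real a)\<close> by (simp add: mult_le_cancel_left_pos)
qed

theorem lemma3p1:
  fixes \<theta> \<epsilon> t :: real and \<mu> :: complex
  assumes "\<theta> < 1/2"
    and "Re \<mu> \<ge> - \<theta>"
    and "\<epsilon> \<in> {-1/2..1/2}"
  shows "norm (Gamma ((\<mu> + 1 + of_real \<epsilon> + \<i> * of_real t) / 2)
               / Gamma ((\<mu> - of_real \<epsilon> + \<i> * of_real t) / 2))
         \<le> norm ((\<mu> + 2 - of_real \<epsilon> + \<i> * of_real t) / 2) powr (1/2 + \<epsilon>)"
proof -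
  define s where "s = (\<mu> - of_real \<epsilon> + \<i> * of_real t) / 2"
  define a where "a = 1/2 + \<epsilon>"
  have numerator: "(\<mu> + 1 + of_real \<epsilon> + \<i> * of_real t) / 2 = s + of_real a"
    and base: "(\<mu> + 2 - of_real \<epsilon> + \<i> * of_real t) / 2 = s + 1"
    by (simp_all add: s_def a_def field_simps)
  have "0 \<le> a" "a \<le> 1" "0 < 2 * Re s + a"
    using assms by (auto simp: s_def a_def field_simps)
  \<comment> \<open>at a pole \<open>Gamma s = 0\<close>, so the quotient is \<open>0\<close>\<close>
  then have "norm (Gamma (s + of_real a) / Gamma s) \<le> norm (s + 1) powr a"
    using norm_Gamma_shift_le_norm_plus_1_powr[of s a]
    by (cases "s \<in> \<int>\<^sub>\<le>\<^sub>0") (auto simp: norm_divide divide_le_eq mult.commute Gamma_nonpos_Int)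
  then show ?thesis
    unfolding numerator base s_def[symmetric] a_def[symmetric] .
qed

end
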